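(* Let $K,M,N_c,N_g,Q$ be positive integers with $N_g\le N_c$, let $\rho_{tr}>0$, and for each $k\in\{0,\dots,K-1\}$ let $\boldsymbol{\Omega}_k\in\mathbb{R}^{M\times N_g}$ have non-negative entries, let $\phi_k\in\{0,\dots,QN_c-1\}$, and let $\varrho_k(\cdot)$ be a real-valued function on the integers. Define $\bar{\boldsymbol{\Omega}}_{k}=[\boldsymbol{\Omega}_k\ \ \mathbf{0}_{M\times(N_c-N_g)}]$ and, for integers $n$, $\boldsymbol{\Omega}_{k'}^{n}=\bar{\boldsymbol{\Omega}}_{k'}\boldsymbol{\Pi}_{N_c}^{n}\mathbf{I}_{N_c\times N_g}$. Write $d_{k',k}=\lfloor\phi_{k'}/Q\rfloor-\lfloor\phi_k/Q\rfloor$ and $$D_{k,i,j}=\sum_{k'=0}^{K-1}\delta\big(\langle\phi_{k'}\rangle_Q-\langle\phi_k\rangle_Q\big)\,[\boldsymbol{\Omega}_{k'}^{d_{k',k}}]_{i,j}+\frac{1}{\rho_{tr}Q}.$$ Define $$\epsilon^{CE}_{(Q)}=\sum_{k=0}^{K-1}\sum_{i=0}^{M-1}\sum_{j=0}^{N_g-1}\left\{[\boldsymbol{\Omega}_k]_{i,j}-\frac{[\boldsymbol{\Omega}_k]_{i,j}^2}{D_{k,i,j}}\right\},\qquad \epsilon^{CP}_{(Q)}(\Delta_\ell)=\sum_{k=0}^{K-1}\sum_{i=0}^{M-1}\sum_{j=0}^{N_g-1}\left\{[\boldsymbol{\Omega}_k]_{i,j}-\frac{\varrho_k^2(\Delta_\ell)[\boldsymbol{\Omega}_k]_{i,j}^2}{D_{k,i,j}}\right\}.$$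 Then $$\epsilon^{CE}_{(Q)}\ge\varepsilon^{CE}_{(Q)}=\sum_{k,i,j}\left\{[\boldsymbol{\Omega}_k]_{i,j}-\frac{[\boldsymbol{\Omega}_k]_{i,j}^2}{[\boldsymbol{\Omega}_k]_{i,j}+\frac{1}{\rho_{tr}Q}}\right\},$$ and for every integer $\Delta_\ell$, $$\epsilon^{CP}_{(Q)}(\Delta_\ell)\ge\varepsilon^{CP}_{(Q)}(\Delta_\ell)=\sum_{k,i,j}\left\{[\boldsymbol{\Omega}_k]_{i,j}-\frac{\varrho_k^2(\Delta_\ell)[\boldsymbol{\Omega}_k]_{i,j}^2}{[\boldsymbol{\Omega}_k]_{i,j}+\frac{1}{\rho_{tr}Q}}\right\}$$ (sums over $k\in\{0,\dots,K-1\}$, $i\in\{0,\dots,M-1\}$, $j\in\{0,\dots,N_g-1\}$). Both lower bounds are achieved if, for all $k\neq k'$ with $\langle\phi_k\rangle_Q=\langle\phi_{k'}\rangle_Q$, $$\left(\bar{\boldsymbol{\Omega}}_{k}\boldsymbol{\Pi}_{N_c}^{\lfloor\phi_k/Q\rfloor}\right)\odot\left(\bar{\boldsymbol{\Omega}}_{k'}\boldsymbol{\Pi}_{N_c}^{\lfloor\phi_{k'}/Q\rfloor}\right)=\mathbf{0}.$$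
   Context: Indices start at $0$. $\langle n\rangle_N$ denotes $n$ modulo $N$, $\lfloor\cdot\rfloor$ the floor. $\delta(0)=1$ and $\delta(n)=0$ for integers $n\ne0$. $\boldsymbol{\Pi}_N^{n}=\begin{bmatrix}\mathbf{0}&\mathbf{I}_{N-\langle n\rangle_N}\\ \mathbf{I}_{\langle n\rangle_N}&\mathbf{0}\end{bmatrix}$; $\mathbf{I}_{N\times G}$ is the first $G$ columns of $\mathbf{I}_N$; $\odot$ is the Hadamard product. Interpretation: adjustable phase shift pilots sent over $Q$ consecutive OFDM symbols; $\boldsymbol{\Omega}_k$ is user $k$'s angle-delay channel power matrix, $\phi_k$ its pilot phase shift, $\rho_{tr}$ the pilot SNR, $\varrho_k$ the temporal correlation function; $\epsilon^{CE}_{(Q)}$ and $\epsilon^{CP}_{(Q)}(\Delta_\ell)$ are the sum MSEs of MMSE channel estimation and prediction. *)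

theory Defs
  imports Complex_Main
begin

text \<open>Matrices are represented as functions on 0-based row/column indices,
  with explicit dimension bounds.\<close>

definition kdelta :: "int \<Rightarrow> real" where
  "kdelta n = (if n = 0 then 1 else 0)"

text \<open>Permutation matrix Pi_N^n = [0, I_{N - <n>_N}; I_{<n>_N}, 0] (N x N),
  entry (r,c), written blockwise.\<close>
definition Pi_mat :: "nat \<Rightarrow> int \<Rightarrow> nat \<Rightarrow> nat \<Rightarrow> real" where
  "Pi_mat N n r c =
     (let s = nat (n mod int N) in
      if r < N - s then (if c = r + s then 1 else 0)
      else (if c + (N - s) = r then 1 else 0))"

text \<open>I_{N x G}: first G columns of I_N.\<close>
definition I_sel :: "nat \<Rightarrow> nat \<Rightarrow> real" where
  "I_sel r c = (if r = c then 1 else 0)"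

definition Obar :: "nat \<Rightarrow> (nat \<Rightarrow> nat \<Rightarrow> real) \<Rightarrow> nat \<Rightarrow> nat \<Rightarrow> real" where
  "Obar Ng A i c = (if c < Ng then A i c else 0)"

definition Obar_Pi :: "nat \<Rightarrow> nat \<Rightarrow> (nat \<Rightarrow> nat \<Rightarrow> real) \<Rightarrow> int \<Rightarrow> nat \<Rightarrow> nat \<Rightarrow> real" where
  "Obar_Pi Nc Ng A n i c = (\<Sum>r<Nc. Obar Ng A i r * Pi_mat Nc n r c)"

definition Omega_shift :: "nat \<Rightarrow> nat \<Rightarrow> (nat \<Rightarrow> nat \<Rightarrow> real) \<Rightarrow> int \<Rightarrow> nat \<Rightarrow> nat \<Rightarrow> real" where
  "Omega_shift Nc Ng A n i j = (\<Sum>c<Nc. Obar_Pi Nc Ng A n i c * I_sel c j)"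

definition dshift :: "nat \<Rightarrow> (nat \<Rightarrow> nat) \<Rightarrow> nat \<Rightarrow> nat \<Rightarrow> int" where
  "dshift Q \<phi> k' k = \<lfloor>real (\<phi> k') / real Q\<rfloor> - \<lfloor>real (\<phi> k) / real Q\<rfloor>"

definition Dden :: "nat \<Rightarrow> nat \<Rightarrow> nat \<Rightarrow> nat \<Rightarrow> real \<Rightarrow> (nat \<Rightarrow> nat \<Rightarrow> nat \<Rightarrow> real)
                    \<Rightarrow> (nat \<Rightarrow> nat) \<Rightarrow> nat \<Rightarrow> nat \<Rightarrow> nat \<Rightarrow> real" where
  "Dden K Nc Ng Q \<rho> \<Omega> \<phi> k i j =
     (\<Sum>k'<K. kdelta (int (\<phi> k' mod Q) - int (\<phi> k mod Q))
               * Omega_shift Nc Ng (\<Omega> k') (dshift Q \<phi> k' k) i j)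
     + 1 / (\<rho> * real Q)"

definition eps_CE :: "nat \<Rightarrow> nat \<Rightarrow> nat \<Rightarrow> nat \<Rightarrow> nat \<Rightarrow> real \<Rightarrow> (nat \<Rightarrow> nat \<Rightarrow> nat \<Rightarrow> real)
                    \<Rightarrow> (nat \<Rightarrow> nat) \<Rightarrow> real" where
  "eps_CE K M Nc Ng Q \<rho> \<Omega> \<phi> =
     (\<Sum>k<K. \<Sum>i<M. \<Sum>j<Ng. \<Omega> k i j - (\<Omega> k i j)\<^sup>2 / Dden K Nc Ng Q \<rho> \<Omega> \<phi> k i j)"

definition eps_CP :: "nat \<Rightarrow> nat \<Rightarrow> nat \<Rightarrow> nat \<Rightarrow> nat \<Rightarrow> real \<Rightarrow> (nat \<Rightarrow> nat \<Rightarrow> nat \<Rightarrow> real)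
                    \<Rightarrow> (nat \<Rightarrow> nat) \<Rightarrow> (nat \<Rightarrow> int \<Rightarrow> real) \<Rightarrow> int \<Rightarrow> real" where
  "eps_CP K M Nc Ng Q \<rho> \<Omega> \<phi> \<rho>c \<Delta> =
     (\<Sum>k<K. \<Sum>i<M. \<Sum>j<Ng. \<Omega> k i j - (\<rho>c k \<Delta>)\<^sup>2 * (\<Omega> k i j)\<^sup>2 / Dden K Nc Ng Q \<rho> \<Omega> \<phi> k i j)"

definition eps_CE_lb :: "nat \<Rightarrow> nat \<Rightarrow> nat \<Rightarrow> nat \<Rightarrow> real \<Rightarrow> (nat \<Rightarrow> nat \<Rightarrow> nat \<Rightarrow> real) \<Rightarrow> real" where
  "eps_CE_lb K M Ng Q \<rho> \<Omega> =
     (\<Sum>k<K. \<Sum>i<M. \<Sum>j<Ng. \<Omega> k i j - (\<Omega> k i j)\<^sup>2 / (\<Omega> k i j + 1 / (\<rho> * real Q)))"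

definition eps_CP_lb :: "nat \<Rightarrow> nat \<Rightarrow> nat \<Rightarrow> nat \<Rightarrow> real \<Rightarrow> (nat \<Rightarrow> nat \<Rightarrow> nat \<Rightarrow> real)
                       \<Rightarrow> (nat \<Rightarrow> int \<Rightarrow> real) \<Rightarrow> int \<Rightarrow> real" where
  "eps_CP_lb K M Ng Q \<rho> \<Omega> \<rho>c \<Delta> =
     (\<Sum>k<K. \<Sum>i<M. \<Sum>j<Ng. \<Omega> k i j - (\<rho>c k \<Delta>)\<^sup>2 * (\<Omega> k i j)\<^sup>2 / (\<Omega> k i j + 1 / (\<rho> * real Q)))"

end

theory Submission
  imports Defs
begin

text \<open>The denominator \<open>D\<^sub>k\<^sub>,\<^sub>i\<^sub>,\<^sub>j\<close> is the user's own power \<open>[\<Omega>\<^sub>k]\<^sub>i\<^sub>,\<^sub>j\<close> plus the noise term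
  \<open>1/(\<rho>\<^sub>t\<^sub>r Q)\<close> plus a nonnegative interference from the other users in the same phase
  class modulo \<open>Q\<close>; since \<open>x - w x\<^sup>2 / D\<close> increases with \<open>D\<close>, dropping the interference gives
  the lower bounds. As \<open>\<Pi>\<^sup>n\<close> is a cyclic column shift, the product of \<open>[\<Omega>\<^sub>k]\<^sub>i\<^sub>,\<^sub>j\<close> with the
  interference of user \<open>k'\<close> is a product of two entries, in the same column, of the
  two matrices appearing in the orthogonality condition, which
  makes it vanish, so the interference is zero wherever it matters and the bounds are
  attained.\<close>

lemma cyclic_shift_iff:
  fixes N r c :: nat and s :: int
  assumes "r < N" "c < N" "0 \<le> s" "s < int N"
  shows "(if r < N - nat s then c = r + nat s else c + (N - nat s) = r)
         \<longleftrightarrow> int r = (int c - s) mod int N"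
proof (cases "s \<le> int c")
  case True
  then have "(int c - s) mod int N = int c - s"
    using assms by (intro mod_pos_pos_trivial) auto
  then show ?thesis using assms True by auto
next
  case False
  have "(int c - s) mod int N = (int c - s + int N) mod int N" by simp
  also have "\<dots> = int c - s + int N"
    using assms False by (intro mod_pos_pos_trivial) auto
  finally show ?thesis using assms False by auto
qed

lemma Pi_mat_eq:
  assumes "r < N" "c < N"
  shows "Pi_mat N n r c = (if r = nat ((int c - n) mod int N) then 1 else 0)"
proof -
  define s where "s = n mod int N"
  have s: "0 \<le> s" "s < int N" using assms by (auto simp: s_def)
  have shift: "(int c - s) mod int N = (int c - n) mod int N"
    unfolding s_def by (simp add: mod_diff_right_eq)
  have "0 \<le> (int c - n) mod int N" using assms by simp
  then have "r = nat ((int c - n) mod int N) \<longleftrightarrow> int r = (int c - n) mod int N" by auto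
  moreover have "Pi_mat N n r c
      = (if (if r < N - nat s then c = r + nat s else c + (N - nat s) = r) then 1 else 0)"
    unfolding Pi_mat_def Let_def s_def[symmetric] by simp
  ultimately show ?thesis
    unfolding cyclic_shift_iff[OF assms s] shift by simp
qed

lemma Obar_Pi_eq:
  assumes "c < N"
  shows "Obar_Pi N Ng A n i c = Obar Ng A i (nat ((int c - n) mod int N))"
proof -
  let ?r = "nat ((int c - n) mod int N)"
  have "?r < N" using assms by (simp add: nat_less_iff)
  moreover have "Obar_Pi N Ng A n i c = (\<Sum>r<N. if r = ?r then Obar Ng A i r else 0)"
    unfolding Obar_Pi_def by (rule sum.cong) (auto simp: Pi_mat_eq assms)
  ultimately show ?thesis by simp
qed

lemma Omega_shift_eq:
  assumes "j < N"
  shows "Omega_shift N Ng A n i j = Obar Ng A i (nat ((int j - n) mod int N))"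
proof -
  have "Omega_shift N Ng A n i j = (\<Sum>c<N. if c = j then Obar_Pi N Ng A n i c else 0)"
    unfolding Omega_shift_def I_sel_def by (rule sum.cong) auto
  then show ?thesis using assms by (simp add: Obar_Pi_eq)
qed

lemma Omega_shift_zero:
  assumes "j < Ng" "Ng \<le> N"
  shows "Omega_shift N Ng A 0 i j = A i j"
  using assms by (simp add: Omega_shift_eq Obar_def)

lemma Omega_shift_nonneg:
  assumes "\<And>j. j < Ng \<Longrightarrow> A i j \<ge> 0" "j < N"
  shows "Omega_shift N Ng A n i j \<ge> 0"
  using assms by (simp add: Omega_shift_eq Obar_def)

text \<open>The column \<open>c = \<langle>j + n\<rangle>\<^sub>N\<close> of the two shifted matrices carries
  \<open>A\<^sub>i\<^sub>,\<^sub>j\<close> and the entry of \<open>B\<close> shifted by \<open>m - n\<close>.\<close>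

lemma Omega_shift_orthogonal:
  assumes orth: "\<forall>c<N. Obar_Pi N Ng A n i c * Obar_Pi N Ng B m i c = 0"
    and "j < Ng" "Ng \<le> N"
  shows "A i j * Omega_shift N Ng B (m - n) i j = 0"
proof -
  define c where "c = nat ((int j + n) mod int N)"
  have c: "c < N" and c_int: "int c = (int j + n) mod int N"
    using assms by (auto simp: c_def nat_less_iff)
  have "(int c - n) mod int N = int j"
    using assms by (simp add: c_int mod_diff_left_eq)
  then have "Obar_Pi N Ng A n i c = A i j"
    using assms c by (simp add: Obar_Pi_eq Obar_def)
  moreover have "(int c - m) mod int N = (int j - (m - n)) mod int N"
    by (simp add: c_int mod_diff_left_eq algebra_simps)
  then have "Obar_Pi N Ng B m i c = Omega_shift N Ng B (m - n) i j"
    using assms c by (simp add: Obar_Pi_eq Omega_shift_eq)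
  ultimately show ?thesis using orth c by metis
qed

definition interference :: "nat \<Rightarrow> nat \<Rightarrow> nat \<Rightarrow> nat \<Rightarrow> (nat \<Rightarrow> nat \<Rightarrow> nat \<Rightarrow> real)
                            \<Rightarrow> (nat \<Rightarrow> nat) \<Rightarrow> nat \<Rightarrow> nat \<Rightarrow> nat \<Rightarrow> real" where
  "interference K Nc Ng Q \<Omega> \<phi> k i j =
     (\<Sum>k'\<in>{..<K} - {k}. kdelta (int (\<phi> k' mod Q) - int (\<phi> k mod Q))
                          * Omega_shift Nc Ng (\<Omega> k') (dshift Q \<phi> k' k) i j)"

lemma Dden_eq:
  assumes "k < K" "j < Ng" "Ng \<le> Nc"
  shows "Dden K Nc Ng Q \<rho> \<Omega> \<phi> k i j
         = \<Omega> k i j + interference K Nc Ng Q \<Omega> \<phi> k i j + 1 / (\<rho> * real Q)"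
  using assms
  by (simp add: Dden_def interference_def sum.remove[of "{..<K}" k] kdelta_def dshift_def
      Omega_shift_zero)

lemma interference_nonneg:
  assumes "\<And>k' j. k' < K \<Longrightarrow> j < Ng \<Longrightarrow> \<Omega> k' i j \<ge> 0" "j < Nc"
  shows "interference K Nc Ng Q \<Omega> \<phi> k i j \<ge> 0"
  unfolding interference_def
  using assms by (intro sum_nonneg) (simp add: kdelta_def Omega_shift_nonneg)

lemma interference_orthogonal:
  assumes orth: "\<And>k'. k' < K \<Longrightarrow> k' \<noteq> k \<Longrightarrow> \<phi> k mod Q = \<phi> k' mod Q \<Longrightarrow>
      \<forall>c<Nc. Obar_Pi Nc Ng (\<Omega> k) \<lfloor>real (\<phi> k) / real Q\<rfloor> i c
            * Obar_Pi Nc Ng (\<Omega> k') \<lfloor>real (\<phi> k') / real Q\<rfloor> i c = 0"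
    and "j < Ng" "Ng \<le> Nc"
  shows "\<Omega> k i j * interference K Nc Ng Q \<Omega> \<phi> k i j = 0"
proof -
  have "\<Omega> k i j * (kdelta (int (\<phi> k' mod Q) - int (\<phi> k mod Q))
          * Omega_shift Nc Ng (\<Omega> k') (dshift Q \<phi> k' k) i j) = 0"
    if "k' \<in> {..<K} - {k}" for k'
  proof (cases "\<phi> k mod Q = \<phi> k' mod Q")
    case True
    then have "\<Omega> k i j * Omega_shift Nc Ng (\<Omega> k') (dshift Q \<phi> k' k) i j = 0"
      unfolding dshift_def using that assms by (intro Omega_shift_orthogonal orth) auto
    then show ?thesis by auto
  qed (simp add: kdelta_def)
  then show ?thesis
    unfolding interference_def sum_distrib_left by (intro sum.neutral) blast
qed

lemma mse_term_mono:
  fixes x w e I :: real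
  assumes "0 \<le> x" "0 \<le> w" "0 < e" "0 \<le> I"
  shows "x - w * x\<^sup>2 / (x + e) \<le> x - w * x\<^sup>2 / (x + I + e)"
proof -
  have "w * x\<^sup>2 / (x + I + e) \<le> w * x\<^sup>2 / (x + e)"
    using assms by (intro divide_left_mono) auto
  then show ?thesis by simp
qed

lemma mse_term_eq:
  fixes x w e I :: real
  assumes "x * I = 0"
  shows "x - w * x\<^sup>2 / (x + I + e) = x - w * x\<^sup>2 / (x + e)"
  using assms by auto

theorem proposition5:
  fixes K M Nc Ng Q :: nat
    and \<rho> :: real
    and \<Omega> :: "nat \<Rightarrow> nat \<Rightarrow> nat \<Rightarrow> real"
    and \<phi> :: "nat \<Rightarrow> nat"
    and \<rho>c :: "nat \<Rightarrow> int \<Rightarrow> real"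
  assumes "K > 0" "M > 0" "Nc > 0" "Ng > 0" "Q > 0" "Ng \<le> Nc"
    and "\<rho> > 0"
    and "\<And>k i j. k < K \<Longrightarrow> i < M \<Longrightarrow> j < Ng \<Longrightarrow> \<Omega> k i j \<ge> 0"
    and "\<And>k. k < K \<Longrightarrow> \<phi> k < Q * Nc"
  shows "eps_CE K M Nc Ng Q \<rho> \<Omega> \<phi> \<ge> eps_CE_lb K M Ng Q \<rho> \<Omega>
       \<and> (\<forall>\<Delta>::int. eps_CP K M Nc Ng Q \<rho> \<Omega> \<phi> \<rho>c \<Delta> \<ge> eps_CP_lb K M Ng Q \<rho> \<Omega> \<rho>c \<Delta>)
       \<and> ((\<forall>k<K. \<forall>k'<K. k \<noteq> k' \<and> \<phi> k mod Q = \<phi> k' mod Q \<longrightarrow>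
             (\<forall>i<M. \<forall>c<Nc.
                Obar_Pi Nc Ng (\<Omega> k) \<lfloor>real (\<phi> k) / real Q\<rfloor> i c
                * Obar_Pi Nc Ng (\<Omega> k') \<lfloor>real (\<phi> k') / real Q\<rfloor> i c = 0))
          \<longrightarrow> eps_CE K M Nc Ng Q \<rho> \<Omega> \<phi> = eps_CE_lb K M Ng Q \<rho> \<Omega>
            \<and> (\<forall>\<Delta>::int. eps_CP K M Nc Ng Q \<rho> \<Omega> \<phi> \<rho>c \<Delta> = eps_CP_lb K M Ng Q \<rho> \<Omega> \<rho>c \<Delta>))"
proof -
  define e where "e = 1 / (\<rho> * real Q)"
  define I where "I = interference K Nc Ng Q \<Omega> \<phi>"
  have D: "Dden K Nc Ng Q \<rho> \<Omega> \<phi> k i j = \<Omega> k i j + I k i j + e"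
    if "k < K" "j < Ng" for k i j
    using Dden_eq that assms unfolding e_def I_def by blast
  have mono: "\<Omega> k i j - w * (\<Omega> k i j)\<^sup>2 / (\<Omega> k i j + e)
      \<le> \<Omega> k i j - w * (\<Omega> k i j)\<^sup>2 / Dden K Nc Ng Q \<rho> \<Omega> \<phi> k i j"
    if "k < K" "i < M" "j < Ng" "0 \<le> w" for k i j w
    unfolding D[OF that(1,3)] I_def e_def
    using that assms by (intro mse_term_mono interference_nonneg) auto
  have "eps_CE_lb K M Ng Q \<rho> \<Omega> \<le> eps_CE K M Nc Ng Q \<rho> \<Omega> \<phi>"
    unfolding eps_CE_def eps_CE_lb_def e_def[symmetric]
    by (intro sum_mono) (use mono[where w = 1] in simp)
  moreover have "eps_CP_lb K M Ng Q \<rho> \<Omega> \<rho>c \<Delta> \<le> eps_CP K M Nc Ng Q \<rho> \<Omega> \<phi> \<rho>c \<Delta>" for \<Delta>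
    unfolding eps_CP_def eps_CP_lb_def e_def[symmetric]
    by (intro sum_mono) (simp add: mono)
  moreover have "eps_CE K M Nc Ng Q \<rho> \<Omega> \<phi> = eps_CE_lb K M Ng Q \<rho> \<Omega>
      \<and> (\<forall>\<Delta>. eps_CP K M Nc Ng Q \<rho> \<Omega> \<phi> \<rho>c \<Delta> = eps_CP_lb K M Ng Q \<rho> \<Omega> \<rho>c \<Delta>)"
    if orth: "\<forall>k<K. \<forall>k'<K. k \<noteq> k' \<and> \<phi> k mod Q = \<phi> k' mod Q \<longrightarrow>
      (\<forall>i<M. \<forall>c<Nc. Obar_Pi Nc Ng (\<Omega> k) \<lfloor>real (\<phi> k) / real Q\<rfloor> i c
                    * Obar_Pi Nc Ng (\<Omega> k') \<lfloor>real (\<phi> k') / real Q\<rfloor> i c = 0)"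
  proof -
    have eq: "\<Omega> k i j - w * (\<Omega> k i j)\<^sup>2 / Dden K Nc Ng Q \<rho> \<Omega> \<phi> k i j
        = \<Omega> k i j - w * (\<Omega> k i j)\<^sup>2 / (\<Omega> k i j + e)"
      if "k < K" "i < M" "j < Ng" for k i j w
      unfolding D[OF that(1,3)] I_def
      using that assms orth by (intro mse_term_eq interference_orthogonal) auto
    show ?thesis
      unfolding eps_CE_def eps_CE_lb_def eps_CP_def eps_CP_lb_def e_def[symmetric]
      using eq[where w = 1] by (auto intro!: sum.cong simp: eq)
  qed
  ultimately show ?thesis by blast
qed
end
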